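(* Let $q$ be a prime power, $n,r$ integers with $r\le\lfloor n/2\rfloor$, $0<\rho<r$, and let $\mathcal{C}\subseteq E_r(q,n)$ have covering radius $\rho$. Let $\mathcal{A} = \{U\in E_r(q,n): d_{\mathrm{I}}(U,\mathcal{C}) = \rho\}$ and $\mathcal{Z} = \{Z\in E_r(q,n): E_{\mathcal{C}}(\{Z\})\ge 1\}$. Then for every $Z\in\mathcal{Z}$, $|\mathcal{A}\cap B_1(Z)|\le V_{\mathrm{C}}(1) - c_\rho$.
   Context: $E_r(q,n)$ is the set of $r$-dimensional subspaces of $\mathrm{GF}(q)^n$ with injection distance $d_{\mathrm{I}}(U,V)=\dim(U+V)-\min\{\dim U,\dim V\}$; $d_{\mathrm{I}}(U,\mathcal{C})=\min_{C\in\mathcal{C}}d_{\mathrm{I}}(U,C)$; $B_t(U)=\{V\in E_r(q,n): d_{\mathrm{I}}(U,V)\le t\}$. The covering radius of $\mathcal{C}$ is $\max_U d_{\mathrm{I}}(U,\mathcal{C})$. For $V\subseteq E_r(q,n)$, $E_{\mathcal{C}}(V) = \sum_{C\in\mathcal{C}}|B_\rho(C)\cap V| - |V|$. ${m\brack k}=\prod_{i=0}^{k-1}\frac{q^m-q^i}{q^k-q^i}$; $N_{\mathrm{C}}(d) = q^{d^2}{r\brack d}{n-r \brack d}$, $V_{\mathrm{C}}(t)=\sum_{d=0}^tN_{\mathrm{C}}(d)$; $c_j = {j\brack 1}^2$. *)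

theory Defs
  imports "HOL-Analysis.Analysis"
begin

text \<open>Ambient space GF(q)^n is modelled as 'a ^ 'n, where 'a is a finite field
  (so q = CARD('a) is a prime power) and n = CARD('n).\<close>

definition Er :: "nat \<Rightarrow> ('a::{field,finite} ^ 'n) set set" where
  "Er r = {U. vec.subspace U \<and> vec.dim U = r}"

definition ssum :: "('a::{field,finite} ^ 'n) set \<Rightarrow> ('a ^ 'n) set \<Rightarrow> ('a ^ 'n) set" where
  "ssum U V = {u + v | u v. u \<in> U \<and> v \<in> V}"

definition dI :: "('a::{field,finite} ^ 'n) set \<Rightarrow> ('a ^ 'n) set \<Rightarrow> nat" where
  "dI U V = vec.dim (ssum U V) - min (vec.dim U) (vec.dim V)"

definition dIset :: "('a::{field,finite} ^ 'n) set \<Rightarrow> ('a ^ 'n) set set \<Rightarrow> nat" where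
  "dIset U C = Min ((\<lambda>X. dI U X) ` C)"

definition ball_I :: "nat \<Rightarrow> nat \<Rightarrow> ('a::{field,finite} ^ 'n) set \<Rightarrow> ('a ^ 'n) set set" where
  "ball_I r t U = {V \<in> Er r. dI U V \<le> t}"

definition covering_radius :: "nat \<Rightarrow> ('a::{field,finite} ^ 'n) set set \<Rightarrow> nat" where
  "covering_radius r C = Max ((\<lambda>U. dIset U C) ` Er r)"

definition excess :: "nat \<Rightarrow> nat \<Rightarrow> ('a::{field,finite} ^ 'n) set set \<Rightarrow> ('a ^ 'n) set set \<Rightarrow> int" where
  "excess r rho C V = (\<Sum>X\<in>C. int (card (ball_I r rho X \<inter> V))) - int (card V)"

definition gbinom :: "nat \<Rightarrow> nat \<Rightarrow> nat \<Rightarrow> real" where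
  "gbinom q m k = (\<Prod>i<k. (real q ^ m - real q ^ i) / (real q ^ k - real q ^ i))"

definition NC :: "nat \<Rightarrow> nat \<Rightarrow> nat \<Rightarrow> nat \<Rightarrow> real" where
  "NC q n r d = real q ^ (d^2) * gbinom q r d * gbinom q (n - r) d"

definition VC :: "nat \<Rightarrow> nat \<Rightarrow> nat \<Rightarrow> nat \<Rightarrow> real" where
  "VC q n r t = (\<Sum>d\<le>t. NC q n r d)"

definition cc :: "nat \<Rightarrow> nat \<Rightarrow> real" where
  "cc q j = (gbinom q j 1)^2"

end

theory Submission
  imports Defs
begin

(* Write g m for the Gaussian coefficient [m, 1]_q = (q^m - 1) / (q - 1).
   An r-space V \<noteq> Z at injection distance 1 from Z meets Z in a hyperplane H of Z, and
   the r-spaces through H other than Z number q g (n - r); hence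
   |B_1(Z)| \<le> 1 + g r * q g (n - r) = V_C(1).
   It remains to find g(\<rho>)^2 spaces in B_1(Z) at distance less than \<rho> from a codeword W
   nearest to Z, since these are not in A. If d(Z, W) < \<rho>, choose K \<subseteq> Z \<inter> W of
   dimension r - \<rho> + 1: Z and the r-spaces through the at least g(\<rho> - 1) hyperplanes of Z
   containing K give at least 1 + g(\<rho> - 1) q g(\<rho> + 1) \<ge> g(\<rho>)^2 of them. If d(Z, W) = \<rho>,
   then for each of the at least g(\<rho>) hyperplanes H of Z containing Z \<inter> W, the g(\<rho>)
   r-spaces V with H \<subseteq> V \<subseteq> H + W qualify, because dim (H + W) = r + \<rho> - 1. *)

lemma card_field_ge_2: "2 \<le> CARD('a::{field,finite})"
proof -
  have "card {0::'a, 1} \<le> CARD('a)" by (rule card_mono) auto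
  then show ?thesis by simp
qed

(* The second form is the one the simplifier sees, One_nat_def being a simp rule. *)
lemma gbinom_one:
  "gbinom q m 1 = (real q ^ m - 1) / (real q - 1)"
  "gbinom q m (Suc 0) = (real q ^ m - 1) / (real q - 1)"
  by (simp_all add: gbinom_def)

lemma gbinom_one_Suc: "q \<ge> 2 \<Longrightarrow> gbinom q (Suc m) 1 = 1 + real q * gbinom q m 1"
  by (simp add: gbinom_one field_simps)

lemma gbinom_one_nonneg: "q \<ge> 2 \<Longrightarrow> 0 \<le> gbinom q m 1"
  by (simp add: gbinom_one)

lemma gbinom_one_mono:
  assumes "q \<ge> 2" "m \<le> m'"
  shows "gbinom q m 1 \<le> gbinom q m' 1"
proof -
  have "real q ^ m \<le> real q ^ m'" using assms by (intro power_increasing) auto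
  then show ?thesis unfolding gbinom_one using assms by (intro divide_right_mono) auto
qed

lemma gbinom_one_sq_le:
  assumes q: "q \<ge> 2" and rho: "0 < rho" "Suc rho \<le> m" and c: "gbinom q (rho - 1) 1 \<le> c"
  shows "(gbinom q rho 1)\<^sup>2 \<le> 1 + c * real q * gbinom q m 1"
proof -
  obtain k where k: "rho = Suc k" using rho(1) gr0_implies_Suc by blast
  let ?x = "real q" and ?a = "gbinom q k 1"
  have a: "0 \<le> ?a" by (rule gbinom_one_nonneg[OF q])
  then have "0 \<le> ?a * ?x" by simp
  then have "?a * ?x \<le> ?a * ?x * ?x" and "(?x * ?a)\<^sup>2 \<le> (?x * ?a)\<^sup>2 * ?x"
    using q by (simp_all add: mult_le_cancel_left1)
  then have "(gbinom q (Suc k) 1)\<^sup>2 \<le> 1 + ?a * ?x * gbinom q (Suc (Suc k)) 1"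
    unfolding gbinom_one_Suc[OF q] by (simp add: power2_eq_square algebra_simps)
  also have "\<dots> \<le> 1 + c * ?x * gbinom q m 1"
    using c k rho(2) a by (intro add_left_mono mult_mono mult_right_mono gbinom_one_mono q
      gbinom_one_nonneg) simp_all
  finally show ?thesis using k by simp
qed

lemma gbinom_eq_prod_divide:
  "gbinom q m k = (\<Prod>i<k. real q ^ m - real q ^ i) / (\<Prod>i<k. real q ^ k - real q ^ i)"
  unfolding gbinom_def by (rule prod_dividef)

lemma prod_pow_diff_nonzero:
  assumes "q \<ge> 2"
  shows "(\<Prod>i<k. real q ^ k - real q ^ i) \<noteq> 0"
proof -
  have "real q ^ i < real q ^ k" if "i < k" for i
    using assms that by (intro power_strict_increasing) auto
  then have "real q ^ k - real q ^ i \<noteq> 0" if "i < k" for i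
    using that by fastforce
  then show ?thesis by simp
qed

lemma prod_pow_diff_Suc:
  fixes x :: real
  shows "(\<Prod>i<Suc m. x ^ Suc M - x ^ i) = (x ^ Suc M - 1) * x ^ m * (\<Prod>i<m. x ^ M - x ^ i)"
proof -
  have "(\<Prod>i<Suc m. x ^ Suc M - x ^ i) = (x ^ Suc M - 1) * (\<Prod>i<m. x * (x ^ M - x ^ i))"
    by (subst prod.lessThan_Suc_shift) (simp add: algebra_simps)
  then show ?thesis by (simp add: prod.distrib)
qed

lemma prod_pow_diff_mult:
  fixes x :: real
  shows "(\<Prod>i<m. x ^ Suc m - x ^ i) * (x - 1) = (x ^ Suc m - 1) * (\<Prod>i<m. x ^ m - x ^ i)"
proof (induction m)
  case (Suc m)
  have "(\<Prod>i<Suc m. x ^ Suc (Suc m) - x ^ i) * (x - 1)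
      = (x ^ Suc (Suc m) - 1) * x ^ m * ((\<Prod>i<m. x ^ Suc m - x ^ i) * (x - 1))"
    by (subst prod_pow_diff_Suc) simp
  also have "\<dots> = (x ^ Suc (Suc m) - 1) * x ^ m * ((x ^ Suc m - 1) * (\<Prod>i<m. x ^ m - x ^ i))"
    by (simp only: Suc.IH)
  also have "\<dots> = (x ^ Suc (Suc m) - 1) * (\<Prod>i<Suc m. x ^ Suc m - x ^ i)"
    by (subst prod_pow_diff_Suc[where M = m]) simp
  finally show ?case .
qed simp

lemma gbinom_Suc_self:
  assumes q: "q \<ge> 2"
  shows "gbinom q (Suc m) m = gbinom q (Suc m) 1"
  using q prod_pow_diff_nonzero[OF q, of m] prod_pow_diff_mult[of "real q" m]
  by (simp add: gbinom_eq_prod_divide[of q _ m] gbinom_one frac_eq_eq)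

lemma card_span_independent:
  fixes B :: "('a::{field,finite} ^ 'n) set"
  assumes B: "vec.independent B"
  shows "card (vec.span B) = CARD('a) ^ card B"
proof -
  have fin: "finite B" using B vec.finiteI_independent by blast
  define comb where "comb u = (\<Sum>v\<in>B. u v *s v)" for u :: "_ \<Rightarrow> 'a"
  have "vec.span B = range comb"
    unfolding comb_def using fin by (rule vec.span_finite)
  also have "\<dots> = comb ` (B \<rightarrow>\<^sub>E UNIV)"
  proof (intro equalityI subsetI)
    fix x assume "x \<in> range comb"
    then obtain u where "x = comb u" by blast
    then have "x = comb (restrict u B)" unfolding comb_def by (simp add: restrict_def)
    then show "x \<in> comb ` (B \<rightarrow>\<^sub>E UNIV)" by auto
  qed auto
  finally have span_eq: "vec.span B = comb ` (B \<rightarrow>\<^sub>E UNIV)" .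
  have "inj_on comb (B \<rightarrow>\<^sub>E UNIV)"
  proof (rule inj_onI)
    fix u w assume u: "u \<in> B \<rightarrow>\<^sub>E UNIV" and w: "w \<in> B \<rightarrow>\<^sub>E UNIV" and "comb u = comb w"
    then have sum_eq: "(\<Sum>v\<in>B. (u v - w v) *s v) = 0"
      unfolding comb_def by (simp add: vector_sub_rdistrib sum_subtractf)
    have coeffs_zero: "\<forall>v\<in>B. c v = 0" if "(\<Sum>v\<in>B. c v *s v) = 0" for c
      using B that vec.independent_explicit by blast
    have "\<forall>v\<in>B. u v - w v = 0" by (rule coeffs_zero) (rule sum_eq)
    then show "u = w" using u w by (auto intro: PiE_ext)
  qed
  then show ?thesis
    unfolding span_eq by (simp add: card_image card_PiE fin)
qed

lemma card_subspace:
  fixes S :: "('a::{field,finite} ^ 'n) set"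
  assumes "vec.subspace S"
  shows "card S = CARD('a) ^ vec.dim S"
proof -
  obtain B where "finite B" "B \<subseteq> S" "vec.independent B" "vec.span B = S" "card B = vec.dim S"
    by (rule vec.basis_subspace_exists[OF assms])
  then show ?thesis using card_span_independent[of B] by simp
qed

definition independent_lists :: "('a::{field,finite} ^ 'n) set \<Rightarrow> nat \<Rightarrow> ('a ^ 'n) list set" where
  "independent_lists S k =
     {xs. length xs = k \<and> set xs \<subseteq> S \<and> distinct xs \<and> vec.independent (set xs)}"

lemma finite_independent_lists: "finite (independent_lists S k)"
proof -
  have "independent_lists S k \<subseteq> {xs. set xs \<subseteq> UNIV \<and> length xs = k}"
    unfolding independent_lists_def by auto
  then show ?thesis by (rule finite_subset) (rule finite_lists_length_eq, simp)
qed

lemma independent_lists_Suc: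
  fixes S :: "('a::{field,finite} ^ 'n) set"
  shows "independent_lists S (Suc k)
    = (\<lambda>(xs, v). xs @ [v]) ` (SIGMA xs:independent_lists S k. S - vec.span (set xs))"
proof (intro equalityI subsetI)
  fix zs assume zs: "zs \<in> independent_lists S (Suc k)"
  then have "length zs = Suc k" unfolding independent_lists_def by simp
  then obtain ys v where zs_eq: "zs = ys @ [v]" by (metis length_Suc_conv_rev)
  have "v \<notin> set ys" "vec.independent (insert v (set ys))" "distinct ys" "length ys = k"
    "set ys \<subseteq> S" "v \<in> S"
    using zs unfolding zs_eq independent_lists_def by auto
  then have "ys \<in> independent_lists S k" "v \<in> S - vec.span (set ys)"
    unfolding independent_lists_def by (auto simp: vec.independent_insert)
  then show "zs \<in> (\<lambda>(xs, v). xs @ [v]) ` (SIGMA xs:independent_lists S k. S - vec.span (set xs))"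
    unfolding zs_eq by (intro image_eqI[where x = "(ys, v)"]) auto
next
  fix zs assume "zs \<in> (\<lambda>(xs, v). xs @ [v]) ` (SIGMA xs:independent_lists S k. S - vec.span (set xs))"
  then obtain xs v where zs_eq: "zs = xs @ [v]" and xs: "xs \<in> independent_lists S k"
    and v: "v \<in> S" "v \<notin> vec.span (set xs)" by auto
  then have "v \<notin> set xs" by (auto intro: vec.span_base)
  then show "zs \<in> independent_lists S (Suc k)"
    using xs v unfolding zs_eq independent_lists_def by (auto simp: vec.independent_insert)
qed

lemma card_independent_lists:
  fixes S :: "('a::{field,finite} ^ 'n) set"
  assumes S: "vec.subspace S"
  shows "k \<le> vec.dim S \<Longrightarrow>
    real (card (independent_lists S k)) = (\<Prod>i<k. real CARD('a) ^ vec.dim S - real CARD('a) ^ i)"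
proof (induction k)
  case 0
  have "independent_lists S 0 = {[]}"
    unfolding independent_lists_def using vec.independent_empty by auto
  then show ?case by simp
next
  case (Suc k)
  have card_compl: "card (S - vec.span (set xs)) = CARD('a) ^ vec.dim S - CARD('a) ^ k"
    if "xs \<in> independent_lists S k" for xs
  proof -
    have "vec.span (set xs) \<subseteq> S"
      using that S unfolding independent_lists_def by (intro vec.span_minimal) auto
    moreover have "card (vec.span (set xs)) = CARD('a) ^ k"
      using that card_span_independent[of "set xs"]
      unfolding independent_lists_def by (auto simp: distinct_card)
    ultimately show ?thesis by (simp add: card_Diff_subset card_subspace S)
  qed
  have "inj_on (\<lambda>(xs, v). xs @ [v]) (SIGMA xs:independent_lists S k. S - vec.span (set xs))"
    by (auto simp: inj_on_def)
  then have "card (independent_lists S (Suc k))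
      = (\<Sum>xs\<in>independent_lists S k. card (S - vec.span (set xs)))"
    unfolding independent_lists_Suc
    by (simp add: card_image card_SigmaI finite_independent_lists)
  also have "\<dots> = card (independent_lists S k) * (CARD('a) ^ vec.dim S - CARD('a) ^ k)"
    using card_compl by simp
  finally show ?case
    using Suc card_field_ge_2[where 'a='a]
    by (simp add: of_nat_diff power_increasing)
qed

lemma span_eq_of_independent_list:
  fixes W :: "('a::{field,finite} ^ 'n) set"
  assumes "vec.subspace W" "vec.dim W = k" "xs \<in> independent_lists W k"
  shows "vec.span (set xs) = W"
proof -
  have "vec.span (set xs) \<subseteq> W"
    using assms unfolding independent_lists_def by (intro vec.span_minimal) auto
  moreover have "vec.dim (vec.span (set xs)) = k"
    using assms unfolding independent_lists_def
    by (auto simp: vec.dim_eq_card_independent distinct_card)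
  ultimately show ?thesis using assms
    by (intro vec.subspace_dim_equal) (auto simp: vec.subspace_span)
qed

text \<open>Each k-dimensional W \<subseteq> S carries exactly as many independent k-lists (ordered
  bases) as any other, so counting the independent k-lists of S by their span yields
  the Gaussian coefficient.\<close>

lemma card_subspaces_dim_mult:
  fixes S :: "('a::{field,finite} ^ 'n) set"
  assumes S: "vec.subspace S" and k: "k \<le> vec.dim S"
  shows "real (card {W. vec.subspace W \<and> vec.dim W = k \<and> W \<subseteq> S})
           * (\<Prod>i<k. real CARD('a) ^ k - real CARD('a) ^ i)
         = (\<Prod>i<k. real CARD('a) ^ vec.dim S - real CARD('a) ^ i)"
proof -
  define F where "F = {W. vec.subspace W \<and> vec.dim W = k \<and> W \<subseteq> S}"
  have lists_eq: "independent_lists S k = (\<Union>W\<in>F. independent_lists W k)"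
  proof (intro equalityI subsetI)
    fix xs assume xs: "xs \<in> independent_lists S k"
    have "vec.span (set xs) \<subseteq> S"
      using xs S unfolding independent_lists_def by (intro vec.span_minimal) auto
    then have "vec.span (set xs) \<in> F"
      using xs unfolding F_def independent_lists_def
      by (auto simp: vec.dim_eq_card_independent distinct_card)
    moreover have "xs \<in> independent_lists (vec.span (set xs)) k"
      using xs unfolding independent_lists_def by (auto intro: vec.span_base)
    ultimately show "xs \<in> (\<Union>W\<in>F. independent_lists W k)" by blast
  qed (auto simp: F_def independent_lists_def)
  have "card (independent_lists S k) = (\<Sum>W\<in>F. card (independent_lists W k))"
    unfolding lists_eq
  proof (rule card_UN_disjoint)
    show "\<forall>W\<in>F. \<forall>W'\<in>F. W \<noteq> W' \<longrightarrow> independent_lists W k \<inter> independent_lists W' k = {}"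
      using span_eq_of_independent_list unfolding F_def by blast
  qed (auto simp: finite_independent_lists)
  then have "real (card (independent_lists S k)) = (\<Sum>W\<in>F. real (card (independent_lists W k)))"
    by simp
  also have "\<dots> = (\<Sum>W\<in>F. (\<Prod>i<k. real CARD('a) ^ k - real CARD('a) ^ i))"
    by (rule sum.cong) (auto simp: F_def card_independent_lists)
  finally show ?thesis using card_independent_lists[OF S k] unfolding F_def by simp
qed

lemma card_subspaces_dim:
  fixes S :: "('a::{field,finite} ^ 'n) set"
  assumes "vec.subspace S" "k \<le> vec.dim S"
  shows "real (card {W. vec.subspace W \<and> vec.dim W = k \<and> W \<subseteq> S}) = gbinom CARD('a) (vec.dim S) k"
  using card_subspaces_dim_mult[OF assms] prod_pow_diff_nonzero[OF card_field_ge_2[where 'a='a], of k]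
  by (simp add: gbinom_eq_prod_divide eq_divide_eq)

lemma card_hyperplanes:
  fixes S :: "('a::{field,finite} ^ 'n) set"
  assumes "vec.subspace S" "vec.dim S = Suc m"
  shows "real (card {W. vec.subspace W \<and> vec.dim W = m \<and> W \<subseteq> S}) = gbinom CARD('a) (Suc m) 1"
  using card_subspaces_dim[OF assms(1), of m] assms(2)
  by (simp add: gbinom_Suc_self[OF card_field_ge_2[where 'a='a], of m])

lemma span_insert_eq_of_dim_Suc:
  fixes H V :: "('a::{field,finite} ^ 'n) set"
  assumes "vec.subspace H" "vec.subspace V" "H \<subseteq> V" "v \<in> V" "v \<notin> H"
    "vec.dim V = Suc (vec.dim H)"
  shows "vec.span (insert v H) = V"
proof -
  have "vec.dim (vec.span (insert v H)) = Suc (vec.dim H)"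
    using assms by (simp add: vec.dim_insert vec.span_eq_iff[THEN iffD2])
  moreover have "vec.span (insert v H) \<subseteq> V" using assms by (intro vec.span_minimal) auto
  ultimately show ?thesis using assms
    by (intro vec.subspace_dim_equal) (auto simp: vec.subspace_span)
qed

text \<open>The sets V - H, for V one dimension above H inside X, partition X - H.\<close>

lemma card_covering_subspaces_mult:
  fixes H X :: "('a::{field,finite} ^ 'n) set"
  assumes HX: "vec.subspace H" "vec.subspace X" "H \<subseteq> X"
  shows "card {V. vec.subspace V \<and> vec.dim V = Suc (vec.dim H) \<and> H \<subseteq> V \<and> V \<subseteq> X}
           * (CARD('a) ^ Suc (vec.dim H) - CARD('a) ^ vec.dim H)
         = CARD('a) ^ vec.dim X - CARD('a) ^ vec.dim H"
proof -
  define F where "F = {V. vec.subspace V \<and> vec.dim V = Suc (vec.dim H) \<and> H \<subseteq> V \<and> V \<subseteq> X}"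
  have X_minus_H: "X - H = (\<Union>V\<in>F. V - H)"
  proof (intro equalityI subsetI)
    fix v assume v: "v \<in> X - H"
    have "vec.dim (vec.span (insert v H)) = Suc (vec.dim H)"
      using v HX by (simp add: vec.dim_insert vec.span_eq_iff[THEN iffD2])
    moreover have "vec.span (insert v H) \<subseteq> X" using v HX by (intro vec.span_minimal) auto
    ultimately have "vec.span (insert v H) \<in> F"
      unfolding F_def by (auto intro: vec.span_base)
    moreover have "v \<in> vec.span (insert v H) - H" using v by (auto intro: vec.span_base)
    ultimately show "v \<in> (\<Union>V\<in>F. V - H)" by blast
  qed (auto simp: F_def)
  have disjoint: "(V - H) \<inter> (W - H) = {}" if "V \<in> F" "W \<in> F" "V \<noteq> W" for V W
  proof (rule ccontr)
    assume "(V - H) \<inter> (W - H) \<noteq> {}"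
    then obtain v where "v \<in> V" "v \<in> W" "v \<notin> H" by blast
    then have "vec.span (insert v H) = V" "vec.span (insert v H) = W"
      using that HX unfolding F_def by (simp_all add: span_insert_eq_of_dim_Suc)
    then show False using \<open>V \<noteq> W\<close> by simp
  qed
  have "card (X - H) = (\<Sum>V\<in>F. card (V - H))"
    unfolding X_minus_H by (rule card_UN_disjoint) (use disjoint in auto)
  also have "\<dots> = (\<Sum>V\<in>F. CARD('a) ^ Suc (vec.dim H) - CARD('a) ^ vec.dim H)"
    by (rule sum.cong) (auto simp: F_def card_Diff_subset card_subspace HX(1))
  finally show ?thesis using HX unfolding F_def by (simp add: card_Diff_subset card_subspace)
qed

lemma card_covering_subspaces:
  fixes H X :: "('a::{field,finite} ^ 'n) set"
  assumes HX: "vec.subspace H" "vec.subspace X" "H \<subseteq> X"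
  shows "real (card {V. vec.subspace V \<and> vec.dim V = Suc (vec.dim H) \<and> H \<subseteq> V \<and> V \<subseteq> X})
     = gbinom CARD('a) (vec.dim X - vec.dim H) 1"
proof -
  let ?c = "real (card {V. vec.subspace V \<and> vec.dim V = Suc (vec.dim H) \<and> H \<subseteq> V \<and> V \<subseteq> X})"
  let ?x = "real CARD('a)" and ?h = "vec.dim H" and ?d = "vec.dim X - vec.dim H"
  have q: "2 \<le> CARD('a)" by (rule card_field_ge_2)
  have dim_X: "vec.dim X = ?h + ?d" using vec.dim_subset[OF HX(3)] by simp
  have "CARD('a) ^ ?h \<le> CARD('a) ^ Suc ?h" "CARD('a) ^ ?h \<le> CARD('a) ^ vec.dim X"
    using q dim_X by (auto intro: power_increasing)
  then have "?c * (?x ^ Suc ?h - ?x ^ ?h) = ?x ^ (?h + ?d) - ?x ^ ?h"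
    using arg_cong[OF card_covering_subspaces_mult[OF HX], of real] dim_X
    by (simp add: of_nat_diff)
  then have "?x ^ ?h * (?c * (?x - 1)) = ?x ^ ?h * (?x ^ ?d - 1)"
    by (simp add: algebra_simps power_add)
  then have "?c * (?x - 1) = ?x ^ ?d - 1" using q by simp
  then show ?thesis using q by (simp add: gbinom_one field_simps)
qed

lemma subspace_ssum: "vec.subspace U \<Longrightarrow> vec.subspace V \<Longrightarrow> vec.subspace (ssum U V)"
  unfolding ssum_def by (rule vec.subspace_sums)

lemma dim_ssum_add_dim_Int:
  "vec.subspace U \<Longrightarrow> vec.subspace V \<Longrightarrow>
    vec.dim (ssum U V) + vec.dim (U \<inter> V) = vec.dim U + vec.dim V"
  unfolding ssum_def by (rule vec.dim_sums_Int)

lemma ssum_subset: "vec.subspace W \<Longrightarrow> U \<subseteq> W \<Longrightarrow> V \<subseteq> W \<Longrightarrow> ssum U V \<subseteq> W"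
  unfolding ssum_def by (auto intro: vec.subspace_add)

lemma subset_ssum_left: "vec.subspace V \<Longrightarrow> U \<subseteq> ssum U V"
  unfolding ssum_def by (force intro: vec.subspace_0)

lemma subset_ssum_right: "vec.subspace U \<Longrightarrow> V \<subseteq> ssum U V"
  unfolding ssum_def by (force intro: vec.subspace_0)

lemma ssum_Int_complement:
  assumes "vec.subspace T" "K \<inter> T \<subseteq> {0}" "G \<subseteq> T" "vec.subspace K"
  shows "ssum K G \<inter> T = G"
proof (intro equalityI subsetI)
  fix x assume x: "x \<in> ssum K G \<inter> T"
  then obtain k g where kg: "x = k + g" "k \<in> K" "g \<in> G" unfolding ssum_def by blast
  then have "k = x - g" by simp
  then have "k \<in> T" using vec.subspace_diff[OF assms(1), of x g] x kg assms(3) by auto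
  then show "x \<in> G" using kg assms(2) by auto
next
  fix g assume "g \<in> G"
  then show "g \<in> ssum K G \<inter> T"
    using subset_ssum_right[OF assms(4)] assms(3) by blast
qed

lemma exists_complement_subspace:
  fixes K Z :: "('a::{field,finite} ^ 'n) set"
  assumes K: "vec.subspace K" and Z: "vec.subspace Z" and KZ: "K \<subseteq> Z"
  obtains T where "vec.subspace T" "T \<subseteq> Z" "K \<inter> T \<subseteq> {0}" "vec.dim K + vec.dim T = vec.dim Z"
proof -
  obtain B where B: "finite B" "B \<subseteq> K" "vec.independent B" "vec.span B = K" "card B = vec.dim K"
    by (rule vec.basis_subspace_exists[OF K])
  have "B \<subseteq> Z" using B(2) KZ by blast
  then obtain B' where B': "B \<subseteq> B'" "B' \<subseteq> Z" "vec.independent B'" "Z \<subseteq> vec.span B'"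
    by (rule vec.maximal_independent_subset_extend[OF _ B(3)])
  have fin_B': "finite B'" using vec.finiteI_independent[OF B'(3)] .
  have span_B': "vec.span B' = Z" using B'(2,4) Z by (rule vec.span_subspace)
  define T where "T = vec.span (B' - B)"
  have "T \<subseteq> Z" unfolding T_def using B'(2) Z by (intro vec.span_minimal) auto
  then have T: "vec.subspace T" "T \<subseteq> Z" unfolding T_def by simp_all
  have dim_T: "vec.dim T = card (B' - B)"
    unfolding T_def by (rule vec.dim_span_eq_card_independent) (rule vec.independent_mono[OF B'(3)], blast)
  have card_B': "card B' = card B + card (B' - B)"
    using card_mono[OF fin_B' B'(1)] by (simp add: card_Diff_subset B(1) B'(1))
  have dim_Z: "vec.dim Z = card B'"
    using span_B' vec.dim_span_eq_card_independent[OF B'(3)] by simp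
  have "ssum K T = vec.span (B \<union> (B' - B))"
    unfolding ssum_def T_def vec.span_Un B(4) ..
  also have "B \<union> (B' - B) = B'" using B' by blast
  finally have "ssum K T = Z" using span_B' by simp
  then have "vec.dim (K \<inter> T) = 0"
    using dim_ssum_add_dim_Int[OF K T(1)] dim_Z dim_T card_B' B(5) by simp
  then have "K \<inter> T \<subseteq> {0}" by simp
  then show ?thesis using T dim_T card_B' dim_Z B(5) by (intro that) auto
qed

text \<open>Equality holds, but the lower bound suffices: it comes from the injection
  G \<mapsto> K + G from the hyperplanes of a complement T of K in Z.\<close>

lemma card_hyperplanes_containing_ge:
  fixes K Z :: "('a::{field,finite} ^ 'n) set"
  assumes K: "vec.subspace K" and Z: "vec.subspace Z" and KZ: "K \<subseteq> Z"
  shows "gbinom CARD('a) (vec.dim Z - vec.dim K) 1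
    \<le> real (card {H. vec.subspace H \<and> vec.dim H = vec.dim Z - 1 \<and> K \<subseteq> H \<and> H \<subseteq> Z})"
proof (cases "vec.dim Z - vec.dim K")
  case 0
  then show ?thesis by (simp add: gbinom_one)
next
  case (Suc t)
  obtain T where T: "vec.subspace T" "T \<subseteq> Z" "K \<inter> T \<subseteq> {0}" "vec.dim K + vec.dim T = vec.dim Z"
    by (rule exists_complement_subspace[OF K Z KZ])
  define HT where "HT = {G. vec.subspace G \<and> vec.dim G = t \<and> G \<subseteq> T}"
  define HK where "HK = {H. vec.subspace H \<and> vec.dim H = vec.dim Z - 1 \<and> K \<subseteq> H \<and> H \<subseteq> Z}"
  have inj: "inj_on (ssum K) HT"
  proof (rule inj_onI)
    fix G G' assume G: "G \<in> HT" and G': "G' \<in> HT" and eq: "ssum K G = ssum K G'"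
    have "G = ssum K G \<inter> T" using G T K unfolding HT_def by (simp add: ssum_Int_complement)
    also have "\<dots> = G'" using G' T K unfolding eq HT_def by (simp add: ssum_Int_complement)
    finally show "G = G'" .
  qed
  have "ssum K G \<in> HK" if G: "G \<in> HT" for G
  proof -
    have G_sub: "vec.subspace G" "vec.dim G = t" "G \<subseteq> Z" "K \<inter> G \<subseteq> {0}"
      using G T unfolding HT_def by auto
    then have "vec.dim (K \<inter> G) = 0" by simp
    then have "vec.dim (ssum K G) = vec.dim K + t"
      using dim_ssum_add_dim_Int[OF K G_sub(1)] G_sub(2) by linarith
    then show ?thesis
      using G_sub K Z KZ T(4) Suc
      unfolding HK_def by (simp add: subspace_ssum subset_ssum_left ssum_subset)
  qed
  then have "ssum K ` HT \<subseteq> HK" by blast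
  then have "card (ssum K ` HT) \<le> card HK" by (intro card_mono) auto
  moreover have "real (card HT) = gbinom CARD('a) (Suc t) 1"
    unfolding HT_def using card_hyperplanes[OF T(1)] T(4) Suc by simp
  ultimately show ?thesis using Suc card_image[OF inj] unfolding HK_def by simp
qed

lemma exists_subspace_of_dim:
  fixes S :: "('a::{field,finite} ^ 'n) set"
  assumes "vec.subspace S" "k \<le> vec.dim S"
  obtains K where "vec.subspace K" "K \<subseteq> S" "vec.dim K = k"
proof -
  obtain B where B: "finite B" "B \<subseteq> S" "vec.independent B" "vec.span B = S" "card B = vec.dim S"
    by (rule vec.basis_subspace_exists[OF assms(1)])
  obtain B' where B': "B' \<subseteq> B" "card B' = k"
    using obtain_subset_with_card_n[of k B] B assms(2) by auto
  have "vec.independent B'" using B B' vec.independent_mono by blast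
  then have "vec.dim (vec.span B') = k" using B' vec.dim_span_eq_card_independent by metis
  moreover have "vec.span B' \<subseteq> S" using B B' assms by (intro vec.span_minimal) auto
  ultimately show ?thesis using that vec.subspace_span by blast
qed

lemma finite_Er: "finite (Er r :: ('a::{field,finite} ^ 'n) set set)"
  by (rule finite_subset[OF subset_UNIV]) simp

lemma mem_Er_iff: "U \<in> Er r \<longleftrightarrow> vec.subspace U \<and> vec.dim U = r"
  by (simp add: Er_def)

lemma dI_Er_eq:
  assumes "U \<in> Er r" "V \<in> Er r"
  shows "dI U V = r - vec.dim (U \<inter> V)"
proof -
  have "vec.dim (ssum U V) + vec.dim (U \<inter> V) = r + r"
    using dim_ssum_add_dim_Int[of U V] assms by (auto simp: mem_Er_iff)
  then show ?thesis unfolding dI_def using assms by (auto simp: mem_Er_iff)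
qed

lemma dim_Int_less_of_Er:
  assumes V: "V \<in> Er r" and Z: "Z \<in> Er r" and "V \<noteq> Z"
  shows "vec.dim (V \<inter> Z) < r"
proof (rule ccontr)
  have V': "vec.subspace V" "vec.dim V = r" and Z': "vec.subspace Z" "vec.dim Z = r"
    using V Z by (auto simp: mem_Er_iff)
  assume "\<not> vec.dim (V \<inter> Z) < r"
  then have "V \<inter> Z = V"
    using V' Z' by (intro vec.subspace_dim_equal) (auto intro: vec.subspace_inter)
  then have "V = Z" using V' Z' by (intro vec.subspace_dim_equal) auto
  then show False using \<open>V \<noteq> Z\<close> by simp
qed

lemma Er_Int_eq_hyperplane:
  assumes V: "V \<in> Er r" and Z: "Z \<in> Er r" and "V \<noteq> Z"
    and H: "vec.subspace H" "vec.dim H = r - 1" "H \<subseteq> V" "H \<subseteq> Z"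
  shows "V \<inter> Z = H"
proof (rule vec.subspace_dim_equal[symmetric])
  show "vec.subspace (V \<inter> Z)" using V Z by (auto simp: mem_Er_iff intro: vec.subspace_inter)
  show "vec.dim (V \<inter> Z) \<le> vec.dim H" using dim_Int_less_of_Er[OF assms(1-3)] H(2) by simp
qed (use H in auto)

lemma mem_ball_1_of_hyperplane:
  assumes V: "V \<in> Er r" and Z: "Z \<in> Er r"
    and H: "H \<subseteq> V" "H \<subseteq> Z" "vec.dim H = r - 1"
  shows "V \<in> ball_I r 1 Z"
proof -
  have "vec.dim H \<le> vec.dim (Z \<inter> V)" using H by (intro vec.dim_subset) auto
  then show ?thesis using V H(3) dI_Er_eq[OF Z V] unfolding ball_I_def by simp
qed

lemma pencils_subset_ball_1:
  assumes Z: "Z \<in> Er r"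
    and HK: "\<And>H. H \<in> HK \<Longrightarrow> vec.subspace H \<and> vec.dim H = r - 1 \<and> H \<subseteq> Z"
  shows "insert Z (\<Union>H\<in>HK. {V \<in> Er r. H \<subseteq> V}) \<subseteq> ball_I r 1 Z"
proof -
  have "Z \<in> ball_I r 1 Z" using Z dI_Er_eq[OF Z Z] unfolding ball_I_def by (simp add: mem_Er_iff)
  moreover have "V \<in> ball_I r 1 Z" if "H \<in> HK" "V \<in> Er r" "H \<subseteq> V" for H V
    using HK[OF that(1)] that(2,3) by (intro mem_ball_1_of_hyperplane[OF _ Z, of _ H]) auto
  ultimately show ?thesis by blast
qed

lemma dI_less_of_common_subspace:
  assumes "V \<in> Er r" "W \<in> Er r" "K \<subseteq> V" "K \<subseteq> W" "r < vec.dim K + rho"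
  shows "dI V W < rho"
proof -
  have "vec.dim K \<le> vec.dim (V \<inter> W)" using assms by (intro vec.dim_subset) auto
  moreover have "vec.dim (V \<inter> W) \<le> r"
    using vec.dim_subset[of "V \<inter> W" V] assms(1) by (auto simp: mem_Er_iff)
  ultimately show ?thesis using assms(5) dI_Er_eq[OF assms(1,2)] by simp
qed

lemma card_pencil:
  fixes Z H :: "('a::{field,finite} ^ 'n) set"
  assumes Z: "Z \<in> Er r" and r: "1 \<le> r" "r \<le> CARD('n)"
    and H: "vec.subspace H" "vec.dim H = r - 1" "H \<subseteq> Z"
  shows "real (card ({V \<in> Er r. H \<subseteq> V} - {Z}))
    = real CARD('a) * gbinom CARD('a) (CARD('n) - r) 1"
proof -
  have "{V \<in> Er r. H \<subseteq> V} = {V. vec.subspace V \<and> vec.dim V = Suc (vec.dim H) \<and> H \<subseteq> V \<and> V \<subseteq> UNIV}"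
    using H r by (auto simp: mem_Er_iff)
  then have "real (card {V \<in> Er r. H \<subseteq> V}) = gbinom CARD('a) (Suc (CARD('n) - r)) 1"
    using card_covering_subspaces[OF H(1) vec.subspace_UNIV] H r by (simp add: card_cart_basis Suc_diff_le)
  also have "\<dots> = 1 + real CARD('a) * gbinom CARD('a) (CARD('n) - r) 1"
    by (rule gbinom_one_Suc[OF card_field_ge_2])
  moreover have "card {V \<in> Er r. H \<subseteq> V} = Suc (card ({V \<in> Er r. H \<subseteq> V} - {Z}))"
    using Z H by (intro card_Suc_Diff1[symmetric]) auto
  ultimately show ?thesis by simp
qed

lemma card_UN_pencils:
  fixes Z :: "('a::{field,finite} ^ 'n) set"
  assumes Z: "Z \<in> Er r"
    and HK: "\<And>H. H \<in> HK \<Longrightarrow> vec.subspace H \<and> vec.dim H = r - 1 \<and> H \<subseteq> Z"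
    and P: "\<And>H. H \<in> HK \<Longrightarrow> P H \<subseteq> {V \<in> Er r. H \<subseteq> V} - {Z}"
  shows "card (\<Union>H\<in>HK. P H) = (\<Sum>H\<in>HK. card (P H))"
proof (rule card_UN_disjoint)
  show "\<forall>H\<in>HK. \<forall>H'\<in>HK. H \<noteq> H' \<longrightarrow> P H \<inter> P H' = {}"
  proof (intro ballI impI)
    fix H H' assume "H \<in> HK" "H' \<in> HK" "H \<noteq> H'"
    show "P H \<inter> P H' = {}"
    proof (rule ccontr)
      assume "P H \<inter> P H' \<noteq> {}"
      then obtain V where V: "V \<in> Er r" "V \<noteq> Z" "H \<subseteq> V" "H' \<subseteq> V"
        using P \<open>H \<in> HK\<close> \<open>H' \<in> HK\<close> by blast
      then have "V \<inter> Z = H" "V \<inter> Z = H'"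
        using Er_Int_eq_hyperplane[OF V(1) Z V(2)] HK \<open>H \<in> HK\<close> \<open>H' \<in> HK\<close> by auto
      then show False using \<open>H \<noteq> H'\<close> by simp
    qed
  qed
qed simp_all

lemma VC_one: "VC q n r 1 = 1 + real q * gbinom q r 1 * gbinom q (n - r) 1"
  by (simp add: VC_def NC_def gbinom_def)

lemma card_ball_1_le:
  fixes Z :: "('a::{field,finite} ^ 'n) set"
  assumes Z: "Z \<in> Er r" and r: "1 \<le> r" "r \<le> CARD('n)"
  shows "real (card (ball_I r 1 Z)) \<le> VC CARD('a) CARD('n) r 1"
proof -
  define HZ where "HZ = {H. vec.subspace H \<and> vec.dim H = r - 1 \<and> H \<subseteq> Z}"
  have Z': "vec.subspace Z" "vec.dim Z = r" using Z by (auto simp: mem_Er_iff)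
  have "ball_I r 1 Z \<subseteq> insert Z (\<Union>H\<in>HZ. {V \<in> Er r. H \<subseteq> V} - {Z})"
  proof
    fix V assume V: "V \<in> ball_I r 1 Z"
    then have V_Er: "V \<in> Er r" and "dI Z V \<le> 1" unfolding ball_I_def by auto
    show "V \<in> insert Z (\<Union>H\<in>HZ. {V \<in> Er r. H \<subseteq> V} - {Z})"
    proof (cases "V = Z")
      case False
      have "vec.dim (V \<inter> Z) < r" using dim_Int_less_of_Er[OF V_Er Z False] .
      moreover have "r - 1 \<le> vec.dim (V \<inter> Z)"
        using \<open>dI Z V \<le> 1\<close> dI_Er_eq[OF Z V_Er] by (simp add: Int_commute)
      moreover have "vec.subspace (V \<inter> Z)"
        using V_Er Z' by (auto simp: mem_Er_iff intro: vec.subspace_inter)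
      ultimately have "V \<inter> Z \<in> HZ" unfolding HZ_def by auto
      then show ?thesis using V_Er False by blast
    qed simp
  qed
  then have "card (ball_I r 1 Z) \<le> card (insert Z (\<Union>H\<in>HZ. {V \<in> Er r. H \<subseteq> V} - {Z}))"
    by (intro card_mono) auto
  also have "\<dots> = Suc (card (\<Union>H\<in>HZ. {V \<in> Er r. H \<subseteq> V} - {Z}))"
    by (rule card_insert_disjoint) auto
  also have "\<dots> \<le> Suc (\<Sum>H\<in>HZ. card ({V \<in> Er r. H \<subseteq> V} - {Z}))"
    by (rule Suc_le_mono[THEN iffD2], rule card_UN_le) simp
  finally have "real (card (ball_I r 1 Z))
      \<le> 1 + (\<Sum>H\<in>HZ. real (card ({V \<in> Er r. H \<subseteq> V} - {Z})))"
    by (simp flip: of_nat_sum)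
  also have "\<dots> = 1 + real (card HZ) * (real CARD('a) * gbinom CARD('a) (CARD('n) - r) 1)"
    using card_pencil[OF Z r] unfolding HZ_def by simp
  also have "real (card HZ) = gbinom CARD('a) r 1"
    using card_hyperplanes[OF Z'(1), of "r - 1"] Z'(2) r unfolding HZ_def by simp
  finally show ?thesis unfolding VC_one by (simp add: algebra_simps)
qed

text \<open>In the following lemmas W stands for a codeword nearest to Z. The r-spaces produced
  meet W in dimension greater than r - \<rho>, hence lie at distance less than \<rho> from the code.\<close>

lemma near_subspaces_in_ball_of_dI_less:
  fixes Z W :: "('a::{field,finite} ^ 'n) set"
  assumes Z: "Z \<in> Er r" and W: "W \<in> Er r" and dist: "dI Z W < rho"
    and rho: "0 < rho" "rho < r" and n: "r + rho < CARD('n)"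
  obtains S where "S \<subseteq> ball_I r 1 Z" "\<forall>V\<in>S. dI V W < rho"
    "(gbinom CARD('a) rho 1)\<^sup>2 \<le> real (card S)"
proof -
  let ?g = "\<lambda>m. gbinom CARD('a) m 1" and ?q = "real CARD('a)"
  have q: "2 \<le> CARD('a)" by (rule card_field_ge_2)
  have Z': "vec.subspace Z" "vec.dim Z = r" and W': "vec.subspace W" "vec.dim W = r"
    using Z W by (auto simp: mem_Er_iff)
  have "vec.dim (Z \<inter> W) \<le> r" using vec.dim_subset[of "Z \<inter> W" Z] Z' by auto
  then have "r - rho + 1 \<le> vec.dim (Z \<inter> W)" using dist dI_Er_eq[OF Z W] rho by linarith
  then obtain K where K: "vec.subspace K" "K \<subseteq> Z \<inter> W" "vec.dim K = r - rho + 1"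
    using exists_subspace_of_dim[of "Z \<inter> W"] Z' W' vec.subspace_inter by metis
  define HK where "HK = {H. vec.subspace H \<and> vec.dim H = vec.dim Z - 1 \<and> K \<subseteq> H \<and> H \<subseteq> Z}"
  have HK: "vec.subspace H \<and> vec.dim H = r - 1 \<and> H \<subseteq> Z" if "H \<in> HK" for H
    using that Z' unfolding HK_def by auto
  have card_HK: "?g (rho - 1) \<le> real (card HK)"
    using card_hyperplanes_containing_ge[OF K(1) Z'(1)] K Z' rho unfolding HK_def by simp
  define S where "S = insert Z (\<Union>H\<in>HK. {V \<in> Er r. H \<subseteq> V} - {Z})"
  have "card S = Suc (card (\<Union>H\<in>HK. {V \<in> Er r. H \<subseteq> V} - {Z}))"
    unfolding S_def by (rule card_insert_disjoint) auto
  also have "card (\<Union>H\<in>HK. {V \<in> Er r. H \<subseteq> V} - {Z})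
      = (\<Sum>H\<in>HK. card ({V \<in> Er r. H \<subseteq> V} - {Z}))"
    by (rule card_UN_pencils[OF Z HK]) auto
  finally have card_S: "real (card S) = 1 + real (card HK) * ?q * ?g (CARD('n) - r)"
    using card_pencil[OF Z] HK rho n by simp
  have bound: "(?g rho)\<^sup>2 \<le> real (card S)"
    unfolding card_S using n by (intro gbinom_one_sq_le[OF q rho(1) _ card_HK]) simp
  have "S \<subseteq> insert Z (\<Union>H\<in>HK. {V \<in> Er r. H \<subseteq> V})" unfolding S_def by blast
  then have S_ball: "S \<subseteq> ball_I r 1 Z" using pencils_subset_ball_1[OF Z HK] by (rule order_trans)
  have S_near: "\<forall>V\<in>S. dI V W < rho"
  proof
    fix V assume "V \<in> S"
    then consider "V = Z" | H where "H \<in> HK" "V \<in> Er r" "H \<subseteq> V" unfolding S_def by blast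
    then show "dI V W < rho"
    proof cases
      case 2
      then have "K \<subseteq> V" "K \<subseteq> W" using K unfolding HK_def by auto
      then show ?thesis using K(3) rho by (intro dI_less_of_common_subspace[OF 2(2) W]) auto
    qed (use dist in simp)
  qed
  show ?thesis by (rule that[OF S_ball S_near bound])
qed

lemma dI_less_of_subset:
  assumes "V \<in> Er r" "W \<in> Er r" "vec.subspace X" "V \<subseteq> X" "W \<subseteq> X" "vec.dim X < r + rho"
  shows "dI V W < rho"
proof -
  have "vec.dim (ssum V W) \<le> vec.dim X" using assms by (intro vec.dim_subset ssum_subset)
  moreover have "vec.dim V \<le> vec.dim X" using vec.dim_subset[OF assms(4)] .
  ultimately show ?thesis using assms unfolding dI_def by (simp add: mem_Er_iff)
qed

lemma near_subspaces_through_hyperplane: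
  fixes Z W H :: "('a::{field,finite} ^ 'n) set"
  assumes Z: "Z \<in> Er r" and W: "W \<in> Er r" and dist: "dI Z W = rho" and rho: "0 < rho"
    and H: "vec.subspace H" "vec.dim H = r - 1" "Z \<inter> W \<subseteq> H" "H \<subseteq> Z"
  defines "F \<equiv> {V. vec.subspace V \<and> vec.dim V = r \<and> H \<subseteq> V \<and> V \<subseteq> ssum H W}"
  shows "real (card F) = gbinom CARD('a) rho 1"
    and "F \<subseteq> {V \<in> Er r. H \<subseteq> V} - {Z}"
    and "\<forall>V\<in>F. dI V W < rho"
proof -
  have Z': "vec.subspace Z" "vec.dim Z = r" and W': "vec.subspace W" "vec.dim W = r"
    using Z W by (auto simp: mem_Er_iff)
  have "vec.dim (Z \<inter> W) \<le> r" using vec.dim_subset[of "Z \<inter> W" Z] Z' by auto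
  then have dim_ZW: "vec.dim (Z \<inter> W) = r - rho" and "rho \<le> r"
    using dist dI_Er_eq[OF Z W] by auto
  have "H \<inter> W = Z \<inter> W" using H by blast
  then have dim_HW: "vec.dim (ssum H W) = r + rho - 1"
    using dim_ssum_add_dim_Int[OF H(1) W'(1)] H(2) W'(2) dim_ZW rho \<open>rho \<le> r\<close> by simp
  have HW: "vec.subspace (ssum H W)" "H \<subseteq> ssum H W" "W \<subseteq> ssum H W"
    using H(1) W'(1) by (simp_all add: subspace_ssum subset_ssum_left subset_ssum_right)
  have "r = Suc (vec.dim H)" using H(2) rho \<open>rho \<le> r\<close> by simp
  then show "real (card F) = gbinom CARD('a) rho 1"
    unfolding F_def using card_covering_subspaces[OF H(1) HW(1,2)] dim_HW H(2) by simp
  have close: "dI V W < rho" if "V \<in> Er r" "V \<subseteq> ssum H W" for V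
    using dI_less_of_subset[OF that(1) W HW(1) that(2) HW(3)] dim_HW rho by simp
  then show "\<forall>V\<in>F. dI V W < rho" unfolding F_def by (simp add: mem_Er_iff)
  show "F \<subseteq> {V \<in> Er r. H \<subseteq> V} - {Z}"
    using close[OF Z] dist unfolding F_def by (auto simp: mem_Er_iff)
qed

lemma near_subspaces_in_ball_of_dI_eq:
  fixes Z W :: "('a::{field,finite} ^ 'n) set"
  assumes Z: "Z \<in> Er r" and W: "W \<in> Er r" and dist: "dI Z W = rho"
    and rho: "0 < rho" "rho < r"
  obtains S where "S \<subseteq> ball_I r 1 Z" "\<forall>V\<in>S. dI V W < rho"
    "(gbinom CARD('a) rho 1)\<^sup>2 \<le> real (card S)"
proof -
  let ?g = "\<lambda>m. gbinom CARD('a) m 1"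
  have Z': "vec.subspace Z" "vec.dim Z = r" and W': "vec.subspace W" "vec.dim W = r"
    using Z W by (auto simp: mem_Er_iff)
  define K where "K = Z \<inter> W"
  have K: "vec.subspace K" "vec.dim K = r - rho"
    using dist dI_Er_eq[OF Z W] vec.dim_subset[of "Z \<inter> W" Z] Z' W'
    unfolding K_def by (auto intro: vec.subspace_inter)
  define HK where "HK = {H. vec.subspace H \<and> vec.dim H = vec.dim Z - 1 \<and> K \<subseteq> H \<and> H \<subseteq> Z}"
  have HK: "vec.subspace H \<and> vec.dim H = r - 1 \<and> H \<subseteq> Z" if "H \<in> HK" for H
    using that Z' unfolding HK_def by auto
  have card_HK: "?g rho \<le> real (card HK)"
    using card_hyperplanes_containing_ge[OF K(1) Z'(1)] K Z' rho unfolding HK_def K_def by simp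
  define F where "F H = {V. vec.subspace V \<and> vec.dim V = r \<and> H \<subseteq> V \<and> V \<subseteq> ssum H W}" for H
  have F: "real (card (F H)) = ?g rho" "F H \<subseteq> {V \<in> Er r. H \<subseteq> V} - {Z}"
    "\<forall>V\<in>F H. dI V W < rho" if "H \<in> HK" for H
    using near_subspaces_through_hyperplane[OF Z W dist rho(1), of H] that Z'
    unfolding F_def HK_def K_def by auto
  define S where "S = (\<Union>H\<in>HK. F H)"
  have "card S = (\<Sum>H\<in>HK. card (F H))"
    unfolding S_def by (rule card_UN_pencils[OF Z HK F(2)])
  then have "real (card S) = (\<Sum>H\<in>HK. real (card (F H)))" by simp
  also have "\<dots> = real (card HK) * ?g rho" using F(1) by simp
  finally have bound: "(?g rho)\<^sup>2 \<le> real (card S)"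
    using card_HK gbinom_one_nonneg[OF card_field_ge_2[where 'a='a]]
    by (simp add: power2_eq_square mult_right_mono)
  have "S \<subseteq> (\<Union>H\<in>HK. {V \<in> Er r. H \<subseteq> V})"
    unfolding S_def using F(2) by (intro UN_mono) auto
  then have S_ball: "S \<subseteq> ball_I r 1 Z" using pencils_subset_ball_1[OF Z HK] by blast
  have S_near: "\<forall>V\<in>S. dI V W < rho" using F(3) unfolding S_def by blast
  show ?thesis by (rule that[OF S_ball S_near bound])
qed

lemma exists_near_subspaces_in_ball:
  fixes Z W :: "('a::{field,finite} ^ 'n) set"
  assumes "Z \<in> Er r" "W \<in> Er r" "dI Z W \<le> rho" "0 < rho" "rho < r" "r + rho < CARD('n)"
  obtains S where "S \<subseteq> ball_I r 1 Z" "\<forall>V\<in>S. dI V W < rho"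
    "(gbinom CARD('a) rho 1)\<^sup>2 \<le> real (card S)"
proof (cases "dI Z W < rho")
  case True
  show ?thesis by (rule near_subspaces_in_ball_of_dI_less[OF assms(1,2) True assms(4-6)]) (rule that)
next
  case False
  then have dist: "dI Z W = rho" using assms(3) by simp
  show ?thesis by (rule near_subspaces_in_ball_of_dI_eq[OF assms(1,2) dist assms(4,5)]) (rule that)
qed

lemma dIset_le: "finite C \<Longrightarrow> X \<in> C \<Longrightarrow> dIset U C \<le> dI U X"
  unfolding dIset_def by (rule Min_le) auto

lemma dIset_attained:
  assumes "finite C" "C \<noteq> {}"
  obtains X where "X \<in> C" "dIset U C = dI U X"
proof -
  have "Min ((\<lambda>X. dI U X) ` C) \<in> (\<lambda>X. dI U X) ` C" using assms by (intro Min_in) auto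
  then show ?thesis using that unfolding dIset_def by blast
qed

lemma dIset_le_covering_radius: "U \<in> Er r \<Longrightarrow> dIset U C \<le> covering_radius r C"
  unfolding covering_radius_def by (rule Max_ge) (simp_all add: finite_Er)

theorem lemma12:
  fixes C :: "('a::{field,finite} ^ 'n) set set"
    and r rho :: nat and Z :: "('a ^ 'n) set"
  assumes "r \<le> CARD('n) div 2"
    and "0 < rho" and "rho < r"
    and "C \<subseteq> Er r" and "C \<noteq> {}"
    and "covering_radius r C = rho"
    and "Z \<in> {Y \<in> Er r. excess r rho C {Y} \<ge> 1}"
  shows "real (card ({U \<in> Er r. dIset U C = rho} \<inter> ball_I r 1 Z))
           \<le> VC CARD('a) CARD('n) r 1 - cc CARD('a) rho"
proof -
  let ?A = "{U \<in> Er r. dIset U C = rho}" and ?B = "ball_I r 1 Z"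
  have Z: "Z \<in> Er r" using assms(7) by simp
  have C: "finite C" using assms(4) finite_Er by (rule finite_subset)
  obtain W where W: "W \<in> C" "dIset Z C = dI Z W" using dIset_attained[OF C assms(5)] .
  have "dI Z W \<le> rho" using W(2) dIset_le_covering_radius[OF Z, of C] assms(6) by simp
  moreover have "W \<in> Er r" using W(1) assms(4) by blast
  moreover have "r + rho < CARD('n)" using assms(1,3) by simp
  ultimately obtain S where S: "S \<subseteq> ?B" "\<forall>V\<in>S. dI V W < rho"
    "(gbinom CARD('a) rho 1)\<^sup>2 \<le> real (card S)"
    using exists_near_subspaces_in_ball[OF Z _ _ assms(2,3)] by blast
  have "V \<notin> ?A" if "V \<in> S" for V using S(2) that dIset_le[OF C W(1), of V] by auto
  then have "(?A \<inter> ?B) \<inter> S = {}" by blast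
  then have "card (?A \<inter> ?B) + card S = card ((?A \<inter> ?B) \<union> S)"
    by (simp add: card_Un_disjoint)
  also have "\<dots> \<le> card ?B" using S(1) by (intro card_mono) (auto simp: ball_I_def)
  finally show ?thesis
    using card_ball_1_le[OF Z] S(3) assms(1,3) unfolding cc_def by linarith
qed

end
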